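(* Let $T<\infty$ (so $\mathbb{T}=\{0,1,\dots,T\}$), and recall $G_t=\Delta$ on $D_t^c$. Define processes $(V_t)_{t\le T}$ (value process) and $(S_t)_{t\le T}$ (survival process) by backward recursion: $V_T=G_T$, $S_T=1_{D_T}$, and for $t=T-1,\dots,0$, \[ J_t=\frac{E[S_{t+1}V_{t+1}\mid\mathcal{F}_t]}{E[S_{t+1}\mid\mathcal{F}_t]}\quad\text{on } \{t<T_e\}, \] \[ \begin{cases} V_t=G_t,\ S_t=1 & \text{on } \{t<T_e\}\cap\{G_t\ge J_t\},\\ V_t=J_t,\ S_t=E[S_{t+1}\mid\mathcal{F}_t] & \text{on } \{t<T_e\}\cap\{G_t<J_t\},\\ V_t=G_t,\ S_t=1_{D_t} & \text{on } \{t\ge T_e\}. \end{cases} \] Then $\theta_t:=1_{\{G_t\ge V_t\}}$, $t\le T$, is the unique equilibrium with preference for early stopping.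
   Context: Let $T\in\mathbb{N}$ and $\mathbb{T}=\{0,1,\dots,T\}$. Let $(\Omega,\mathcal{F},P)$ be a probability space with a filtration $(\mathcal{F}_t)_{t\le T}$, $\mathcal{F}_0$ trivial. Let $\sigma$ be a stopping time with values in $\{0,1,2,\dots\}\cup\{\infty\}$ and $P(\sigma>0)=1$; set $D_t=\{t<\sigma\}$. Let $G=(G_t)_{t\le T}$ be an adapted payoff process; on $D_t^c$ one sets $G_t=\Delta$, an auxiliary symbol with the convention $0\cdot\Delta=0$. Standing assumption: $E[\sup_{t\le T}|G_t|1_{D_t}]<\infty$. For $s,t\in[0,\infty]$ write $s\lhd t$ iff $s<t$ or $t=\infty$. Convention: $\inf\emptyset=\infty$. The effective horizon is the random time $T_e=T\wedge\inf\{0\le t<T: P(D_{t+1}\mid\mathcal{F}_t)=0\}$. A stopping policy is a $\{0,1\}$-valued adapted process $\theta=(\theta_t)_{t\in\mathbb{T}}$, and $\mathcal{L}_t\theta=\inf\{s>t:\theta_s=1\}$. $\theta$ is admissible if $P(\mathcal{L}_t\theta\lhd\sigma\mid\mathcal{F}_t)>0$ on $\{t<T_e\}$ and $\theta_t=1$ on $\{t\ge T_e\}$. For admissible $\theta$, on $\{t<T_e\}$ the continuation value is $J_t(\theta)=E[G_{\mathcal{L}_t\theta}1_{\{\mathcal{L}_t\theta\lhd\sigma\}}\mid\mathcal{F}_t]/P(\mathcal{L}_t\theta\lhd\sigma\mid\mathcal{F}_t)$. Define $\Phi(\theta)_t=1$ on $\{t<T_e, G_t>J_t(\theta)\}$,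 $\Phi(\theta)_t=\theta_t$ on $\{t<T_e,G_t=J_t(\theta)\}$, $\Phi(\theta)_t=0$ on $\{t<T_e,G_t<J_t(\theta)\}$, $\Phi(\theta)_t=1$ on $\{t\ge T_e\}$. An equilibrium is an admissible $\theta$ with $\Phi(\theta)=\theta$; it is an equilibrium with preference for early stopping if in addition $\theta_t=1$ on $\{t<T_e, G_t=J_t(\theta)\}$ (i.e., $\theta_t=1$ exactly on $\{t\ge T_e\}\cup\{t<T_e,G_t\ge J_t(\theta)\}$). *)

theory Defs
  imports "HOL-Probability.Probability" "HOL-Library.Extended_Nat"
begin

text \<open>Conventions: time horizon T :: nat, time index set {0..T}; sigma :: 'a => enat
  (values in {0,1,2,...} union {infinity}); the payoff G :: nat => 'a => real, where the
  auxiliary symbol Delta is modelled by an arbitrary (junk) real value outside D t.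
  Conditional expectations are the library's fixed version real_cond_exp; all equalities
  of random variables and all statements "on an event" are understood almost surely.\<close>

definition lhd :: "enat \<Rightarrow> enat \<Rightarrow> bool" where
  "lhd s t \<longleftrightarrow> s < t \<or> t = \<infinity>"

definition Dset :: "'a measure \<Rightarrow> ('a \<Rightarrow> enat) \<Rightarrow> nat \<Rightarrow> 'a set" where
  "Dset M \<sigma> t = {\<omega> \<in> space M. enat t < \<sigma> \<omega>}"

definition cprob :: "'a measure \<Rightarrow> (nat \<Rightarrow> 'a measure) \<Rightarrow> nat \<Rightarrow> 'a set \<Rightarrow> 'a \<Rightarrow> real" where
  "cprob M F t A = real_cond_exp M (F t) (indicator A)"

definition Te :: "'a measure \<Rightarrow> (nat \<Rightarrow> 'a measure) \<Rightarrow> ('a \<Rightarrow> enat) \<Rightarrow> nat \<Rightarrow> 'a \<Rightarrow> nat" where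
  "Te M F \<sigma> T \<omega> =
     (if \<exists>t<T. cprob M F t (Dset M \<sigma> (Suc t)) \<omega> = 0
      then (LEAST t. t < T \<and> cprob M F t (Dset M \<sigma> (Suc t)) \<omega> = 0) else T)"

definition Lop :: "nat \<Rightarrow> (nat \<Rightarrow> 'a \<Rightarrow> bool) \<Rightarrow> nat \<Rightarrow> 'a \<Rightarrow> enat" where
  "Lop T \<theta> t \<omega> =
     (if \<exists>s. t < s \<and> s \<le> T \<and> \<theta> s \<omega> then enat (LEAST s. t < s \<and> s \<le> T \<and> \<theta> s \<omega>) else \<infinity>)"

text \<open>G evaluated at a random time; the value at infinity is irrelevant (it is always
  multiplied by an indicator that vanishes a.s.)\<close>
definition Gat :: "(nat \<Rightarrow> 'a \<Rightarrow> real) \<Rightarrow> enat \<Rightarrow> 'a \<Rightarrow> real" where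
  "Gat G L \<omega> = (case L of enat n \<Rightarrow> G n \<omega> | \<infinity> \<Rightarrow> 0)"

definition survive_set :: "'a measure \<Rightarrow> ('a \<Rightarrow> enat) \<Rightarrow> nat \<Rightarrow> (nat \<Rightarrow> 'a \<Rightarrow> bool) \<Rightarrow> nat \<Rightarrow> 'a set" where
  "survive_set M \<sigma> T \<theta> t = {\<omega> \<in> space M. lhd (Lop T \<theta> t \<omega>) (\<sigma> \<omega>)}"

definition Jcont :: "'a measure \<Rightarrow> (nat \<Rightarrow> 'a measure) \<Rightarrow> ('a \<Rightarrow> enat) \<Rightarrow> (nat \<Rightarrow> 'a \<Rightarrow> real)
    \<Rightarrow> nat \<Rightarrow> (nat \<Rightarrow> 'a \<Rightarrow> bool) \<Rightarrow> nat \<Rightarrow> 'a \<Rightarrow> real" where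
  "Jcont M F \<sigma> G T \<theta> t \<omega> =
     real_cond_exp M (F t)
       (\<lambda>\<omega>'. Gat G (Lop T \<theta> t \<omega>') \<omega>' * indicator (survive_set M \<sigma> T \<theta> t) \<omega>') \<omega>
     / cprob M F t (survive_set M \<sigma> T \<theta> t) \<omega>"

definition admissible :: "'a measure \<Rightarrow> (nat \<Rightarrow> 'a measure) \<Rightarrow> ('a \<Rightarrow> enat) \<Rightarrow> nat
    \<Rightarrow> (nat \<Rightarrow> 'a \<Rightarrow> bool) \<Rightarrow> bool" where
  "admissible M F \<sigma> T \<theta> \<longleftrightarrow>
     (\<forall>t\<le>T. \<theta> t \<in> measurable (F t) (count_space UNIV)) \<and>
     (\<forall>t\<le>T. AE \<omega> in M. t < Te M F \<sigma> T \<omega> \<longrightarrow> cprob M F t (survive_set M \<sigma> T \<theta> t) \<omega> > 0) \<and>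
     (\<forall>t\<le>T. AE \<omega> in M. Te M F \<sigma> T \<omega> \<le> t \<longrightarrow> \<theta> t \<omega>)"

definition Phi :: "'a measure \<Rightarrow> (nat \<Rightarrow> 'a measure) \<Rightarrow> ('a \<Rightarrow> enat) \<Rightarrow> (nat \<Rightarrow> 'a \<Rightarrow> real)
    \<Rightarrow> nat \<Rightarrow> (nat \<Rightarrow> 'a \<Rightarrow> bool) \<Rightarrow> nat \<Rightarrow> 'a \<Rightarrow> bool" where
  "Phi M F \<sigma> G T \<theta> t \<omega> =
     (if t < Te M F \<sigma> T \<omega> then
        (if G t \<omega> > Jcont M F \<sigma> G T \<theta> t \<omega> then True
         else if G t \<omega> = Jcont M F \<sigma> G T \<theta> t \<omega> then \<theta> t \<omega>
         else False)
      else True)"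

definition equilibrium :: "'a measure \<Rightarrow> (nat \<Rightarrow> 'a measure) \<Rightarrow> ('a \<Rightarrow> enat) \<Rightarrow> (nat \<Rightarrow> 'a \<Rightarrow> real)
    \<Rightarrow> nat \<Rightarrow> (nat \<Rightarrow> 'a \<Rightarrow> bool) \<Rightarrow> bool" where
  "equilibrium M F \<sigma> G T \<theta> \<longleftrightarrow>
     admissible M F \<sigma> T \<theta> \<and> (\<forall>t\<le>T. AE \<omega> in M. Phi M F \<sigma> G T \<theta> t \<omega> = \<theta> t \<omega>)"

definition equilibrium_early :: "'a measure \<Rightarrow> (nat \<Rightarrow> 'a measure) \<Rightarrow> ('a \<Rightarrow> enat) \<Rightarrow> (nat \<Rightarrow> 'a \<Rightarrow> real)
    \<Rightarrow> nat \<Rightarrow> (nat \<Rightarrow> 'a \<Rightarrow> bool) \<Rightarrow> bool" where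
  "equilibrium_early M F \<sigma> G T \<theta> \<longleftrightarrow>
     equilibrium M F \<sigma> G T \<theta> \<and>
     (\<forall>t\<le>T. AE \<omega> in M. t < Te M F \<sigma> T \<omega> \<and> G t \<omega> = Jcont M F \<sigma> G T \<theta> t \<omega> \<longrightarrow> \<theta> t \<omega>)"

text \<open>Backward recursion for (V_t, S_t): VSrec n gives (V_(T-n), S_(T-n)) for n <= T.\<close>
primrec VSrec :: "'a measure \<Rightarrow> (nat \<Rightarrow> 'a measure) \<Rightarrow> ('a \<Rightarrow> enat) \<Rightarrow> (nat \<Rightarrow> 'a \<Rightarrow> real)
    \<Rightarrow> nat \<Rightarrow> nat \<Rightarrow> ('a \<Rightarrow> real) \<times> ('a \<Rightarrow> real)" where
  "VSrec M F \<sigma> G T 0 = (G T, indicator (Dset M \<sigma> T))"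
| "VSrec M F \<sigma> G T (Suc n) =
     (let t = T - Suc n; V' = fst (VSrec M F \<sigma> G T n); S' = snd (VSrec M F \<sigma> G T n);
          ES = real_cond_exp M (F t) S';
          J = (\<lambda>\<omega>. real_cond_exp M (F t) (\<lambda>\<omega>'. S' \<omega>' * V' \<omega>') \<omega> / ES \<omega>)
      in ((\<lambda>\<omega>. if t < Te M F \<sigma> T \<omega> then (if G t \<omega> \<ge> J \<omega> then G t \<omega> else J \<omega>) else G t \<omega>),
          (\<lambda>\<omega>. if t < Te M F \<sigma> T \<omega> then (if G t \<omega> \<ge> J \<omega> then 1 else ES \<omega>)
                else indicator (Dset M \<sigma> t) \<omega>)))"

definition Vproc :: "'a measure \<Rightarrow> (nat \<Rightarrow> 'a measure) \<Rightarrow> ('a \<Rightarrow> enat) \<Rightarrow> (nat \<Rightarrow> 'a \<Rightarrow> real)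
    \<Rightarrow> nat \<Rightarrow> nat \<Rightarrow> 'a \<Rightarrow> real" where
  "Vproc M F \<sigma> G T t = fst (VSrec M F \<sigma> G T (T - t))"

definition Sproc :: "'a measure \<Rightarrow> (nat \<Rightarrow> 'a measure) \<Rightarrow> ('a \<Rightarrow> enat) \<Rightarrow> (nat \<Rightarrow> 'a \<Rightarrow> real)
    \<Rightarrow> nat \<Rightarrow> nat \<Rightarrow> 'a \<Rightarrow> real" where
  "Sproc M F \<sigma> G T t = snd (VSrec M F \<sigma> G T (T - t))"

end

theory Submission
  imports Defs
begin

(* Let theta stop as soon as G >= V and let tau_t be its first stopping time at or after t.
  Backward induction shows S_t = P(tau_t < sigma | F_t) and
  S_t V_t = E[G_{tau_t} 1{tau_t < sigma} | F_t], with S_t > 0 on D_t and before the effective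
  horizon.  By the tower property the continuation value J_t(theta) is then the J_t of the
  recursion, so theta is an equilibrium with preference for early stopping.  Conversely,
  J_t(theta) depends only on theta after t, so any such equilibrium is forced, from T
  downwards, to coincide with theta. *)

lemma set_integral_nonneg_eq_0_iff_AE:
  fixes f :: "'a \<Rightarrow> real"
  assumes "integrable M f" "AE x in M. 0 \<le> f x" "A \<in> sets M"
  shows "(\<integral>x\<in>A. f x \<partial>M) = 0 \<longleftrightarrow> (AE x\<in>A in M. f x = 0)"
proof -
  have "(\<integral>x. indicator A x * f x \<partial>M) = 0 \<longleftrightarrow> (AE x in M. indicator A x * f x = 0)"
    using assms by (intro integral_nonneg_eq_0_iff_AE)
      (auto simp: mult.commute intro: integrable_real_mult_indicator)
  then show ?thesis
    unfolding set_lebesgue_integral_def by (simp add: indicator_def)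
qed

context sigma_finite_subalgebra
begin

lemma real_cond_exp_eq_0_on_iff:
  assumes f: "integrable M f" "AE x in M. 0 \<le> f x" and A: "A \<in> sets F"
  shows "(AE x\<in>A in M. real_cond_exp M F f x = 0) \<longleftrightarrow> (AE x\<in>A in M. f x = 0)"
proof -
  have "A \<in> sets M"
    using A subalg by (auto simp: subalgebra_def)
  moreover have "AE x in M. 0 \<le> real_cond_exp M F f x"
    using f by (intro real_cond_exp_pos) auto
  ultimately show ?thesis
    using f real_cond_exp_intA[OF f(1) A]
    by (simp add: set_integral_nonneg_eq_0_iff_AE[symmetric] real_cond_exp_int(1))
qed

lemma real_cond_exp_pos_if_pos:
  assumes f: "integrable M f" "AE x in M. 0 \<le> f x"
    and g: "integrable M g" "AE x in M. 0 \<le> g x"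
    and pos: "AE x in M. 0 < g x \<longrightarrow> 0 < f x"
  shows "AE x in M. 0 < real_cond_exp M F g x \<longrightarrow> 0 < real_cond_exp M F f x"
proof -
  define B where "B = {x \<in> space M. real_cond_exp M F f x \<le> 0}"
  have "B = {x \<in> space F. real_cond_exp M F f x \<le> 0}"
    using subalg by (simp add: B_def subalgebra_def)
  also have "\<dots> \<in> sets F"
    by measurable
  finally have B: "B \<in> sets F" .
  have "AE x in M. 0 \<le> real_cond_exp M F f x"
    using f by (intro real_cond_exp_pos) auto
  then have "AE x\<in>B in M. real_cond_exp M F f x = 0"
    by eventually_elim (auto simp: B_def)
  then have "AE x\<in>B in M. f x = 0"
    using real_cond_exp_eq_0_on_iff[OF f B] by simp
  then have "AE x\<in>B in M. g x = 0"
    using pos g(2) by eventually_elim auto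
  then have "AE x\<in>B in M. real_cond_exp M F g x = 0"
    using real_cond_exp_eq_0_on_iff[OF g B] by simp
  then show ?thesis
    using AE_space by eventually_elim (auto simp: B_def)
qed

lemma real_cond_exp_if:
  assumes P[measurable]: "Measurable.pred F P" and f[measurable]: "f \<in> borel_measurable F"
    and "integrable M f" "integrable M g"
  shows "AE x in M. real_cond_exp M F (\<lambda>x. if P x then f x else g x) x
    = (if P x then f x else real_cond_exp M F g x)"
proof -
  define f' where "f' x = (if P x then f x else 0)" for x
  define c where "c x = (if P x then 0 else 1 :: real)" for x
  have [measurable]: "f' \<in> borel_measurable F" "c \<in> borel_measurable F"
    unfolding f'_def c_def by measurable
  have [measurable]: "g \<in> borel_measurable M"
    using assms by auto
  have [measurable]: "f' \<in> borel_measurable M" "c \<in> borel_measurable M"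
    by (rule measurable_from_subalg[OF subalg], measurable)+
  have int: "integrable M f'" "integrable M (\<lambda>x. c x * g x)"
    by (rule Bochner_Integration.integrable_bound[OF \<open>integrable M f\<close>], simp, simp add: f'_def)
      (rule Bochner_Integration.integrable_bound[OF \<open>integrable M g\<close>], simp, simp add: c_def)
  have split: "(\<lambda>x. if P x then f x else g x) = (\<lambda>x. f' x + c x * g x)"
    by (auto simp: f'_def c_def)
  have "AE x in M. real_cond_exp M F (\<lambda>x. f' x + c x * g x) x
      = real_cond_exp M F f' x + real_cond_exp M F (\<lambda>x. c x * g x) x"
    using int by (rule real_cond_exp_add)
  moreover have "AE x in M. real_cond_exp M F f' x = f' x"
    using int by (intro real_cond_exp_F_meas) auto
  moreover have "AE x in M. real_cond_exp M F (\<lambda>x. c x * g x) x = c x * real_cond_exp M F g x"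
    using int by (intro real_cond_exp_mult) auto
  ultimately show ?thesis
    unfolding split by eventually_elim (simp add: f'_def c_def)
qed

end

lemma lhd_enat: "lhd (enat k) s \<longleftrightarrow> enat k < s"
  unfolding lhd_def by auto

lemma Lop_le:
  assumes "Lop T \<theta> t \<omega> = enat k"
  shows "k \<le> T"
proof -
  from assms obtain s where s: "t < s \<and> s \<le> T \<and> \<theta> s \<omega>"
    and k: "k = (LEAST s. t < s \<and> s \<le> T \<and> \<theta> s \<omega>)"
    unfolding Lop_def by (auto split: if_splits)
  have "k \<le> s"
    unfolding k by (rule Least_le) (rule s)
  with s show ?thesis
    by simp
qed

lemma Lop_cong:
  assumes "\<And>s. t < s \<Longrightarrow> s \<le> T \<Longrightarrow> \<theta> s \<omega> = \<theta>' s \<omega>"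
  shows "Lop T \<theta> t \<omega> = Lop T \<theta>' t \<omega>"
proof -
  have "(\<lambda>s. t < s \<and> s \<le> T \<and> \<theta> s \<omega>) = (\<lambda>s. t < s \<and> s \<le> T \<and> \<theta>' s \<omega>)"
    using assms by auto
  then show ?thesis
    unfolding Lop_def by (simp only:)
qed

lemma Lop_measurable:
  assumes "\<And>s. s \<le> T \<Longrightarrow> Measurable.pred M (\<theta> s)"
  shows "Lop T \<theta> t \<in> measurable M (count_space UNIV)"
proof -
  define Q where "Q s \<omega> \<longleftrightarrow> t < s \<and> s \<le> T \<and> \<theta> s \<omega>" for s \<omega>
  have [measurable]: "Measurable.pred M (Q s)" for s
  proof (cases "t < s \<and> s \<le> T")
    case True
    then show ?thesis
      using assms[of s] by (simp add: Q_def[abs_def])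
  next
    case False
    then have "Q s = (\<lambda>_. False)"
      by (auto simp: Q_def)
    then show ?thesis
      by simp
  qed
  have "Lop T \<theta> t = (\<lambda>\<omega>. if \<exists>s. Q s \<omega> then enat (LEAST s. Q s \<omega>) else \<infinity>)"
    unfolding Lop_def Q_def by simp
  also have "\<dots> \<in> measurable M (count_space UNIV)"
    by measurable
  finally show ?thesis .
qed

lemma equilibrium_early_iff:
  "equilibrium_early M F \<sigma> G T \<theta> \<longleftrightarrow> admissible M F \<sigma> T \<theta> \<and>
    (\<forall>t\<le>T. AE \<omega> in M. \<theta> t \<omega> = (t < Te M F \<sigma> T \<omega> \<longrightarrow> Jcont M F \<sigma> G T \<theta> t \<omega> \<le> G t \<omega>))"
proof -
  have "(Phi M F \<sigma> G T \<theta> t \<omega> = \<theta> t \<omega> \<and>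
      (t < Te M F \<sigma> T \<omega> \<and> G t \<omega> = Jcont M F \<sigma> G T \<theta> t \<omega> \<longrightarrow> \<theta> t \<omega>)) \<longleftrightarrow>
      \<theta> t \<omega> = (t < Te M F \<sigma> T \<omega> \<longrightarrow> Jcont M F \<sigma> G T \<theta> t \<omega> \<le> G t \<omega>)" for t \<omega>
    by (auto simp: Phi_def)
  then have "(AE \<omega> in M. Phi M F \<sigma> G T \<theta> t \<omega> = \<theta> t \<omega>) \<and>
      (AE \<omega> in M. t < Te M F \<sigma> T \<omega> \<and> G t \<omega> = Jcont M F \<sigma> G T \<theta> t \<omega> \<longrightarrow> \<theta> t \<omega>) \<longleftrightarrow>
      (AE \<omega> in M. \<theta> t \<omega> = (t < Te M F \<sigma> T \<omega> \<longrightarrow> Jcont M F \<sigma> G T \<theta> t \<omega> \<le> G t \<omega>))" for t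
    by (simp only: flip: AE_conj_iff)
  then show ?thesis
    unfolding equilibrium_early_def equilibrium_def by blast
qed

locale stopping_problem = prob_space M for M :: "'a measure" +
  fixes F :: "nat \<Rightarrow> 'a measure" and \<sigma> :: "'a \<Rightarrow> enat" and G :: "nat \<Rightarrow> 'a \<Rightarrow> real"
    and T :: nat
  assumes subalgebra_F: "\<And>t. t \<le> T \<Longrightarrow> subalgebra M (F t)"
    and sets_F_mono: "\<And>s t. s \<le> t \<Longrightarrow> t \<le> T \<Longrightarrow> sets (F s) \<subseteq> sets (F t)"
    and \<sigma>_measurable: "\<sigma> \<in> measurable M (count_space UNIV)"
    and \<sigma>_stopping_time: "\<And>t. t \<le> T \<Longrightarrow> {\<omega> \<in> space M. \<sigma> \<omega> \<le> enat t} \<in> sets (F t)"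
    and G_adapted: "\<And>t. t \<le> T \<Longrightarrow> G t \<in> borel_measurable (F t)"
    and G_dominated:
      "integrable M (\<lambda>\<omega>. Max ((\<lambda>t. \<bar>G t \<omega>\<bar> * indicator (Dset M \<sigma> t) \<omega>) ` {..T}))"
begin

abbreviation "D \<equiv> Dset M \<sigma>"
abbreviation "Teff \<equiv> Te M F \<sigma> T"
abbreviation "V \<equiv> Vproc M F \<sigma> G T"
abbreviation "S \<equiv> Sproc M F \<sigma> G T"
abbreviation "CE t \<equiv> real_cond_exp M (F t)"
abbreviation "J t \<omega> \<equiv> CE t (\<lambda>\<omega>. S (Suc t) \<omega> * V (Suc t) \<omega>) \<omega> / CE t (S (Suc t)) \<omega>"
abbreviation "\<theta>\<^sub>V t \<omega> \<equiv> V t \<omega> \<le> G t \<omega>"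

lemma sigma_finite_subalgebra_F: "t \<le> T \<Longrightarrow> sigma_finite_subalgebra M (F t)"
  using finite_measure_subalgebra_is_sigma_finite[of M "F t"] subalgebra_F[of t] finite_measure_axioms
  by (simp add: finite_measure_subalgebra_def finite_measure_subalgebra_axioms_def)

lemma subalgebra_F_F: "s \<le> t \<Longrightarrow> t \<le> T \<Longrightarrow> subalgebra (F t) (F s)"
  using subalgebra_F[of s] subalgebra_F[of t] sets_F_mono[of s t] by (auto simp: subalgebra_def)

lemma measurable_F_M: "t \<le> T \<Longrightarrow> f \<in> measurable (F t) N \<Longrightarrow> f \<in> measurable M N"
  using measurable_from_subalg subalgebra_F by blast

lemma space_F: "t \<le> T \<Longrightarrow> space (F t) = space M"
  using subalgebra_F by (auto simp: subalgebra_def)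

lemma sets_D: "D t \<in> sets M"
  using \<sigma>_measurable unfolding Dset_def by measurable

lemma integrable_indicator_D: "integrable M (indicator (D t) :: 'a \<Rightarrow> real)"
  using sets_D by (intro integrable_real_indicator) (auto simp: less_top[symmetric])

lemma sets_F_D: "t \<le> T \<Longrightarrow> D t \<in> sets (F t)"
proof -
  assume t: "t \<le> T"
  have "D t = space (F t) - {\<omega> \<in> space M. \<sigma> \<omega> \<le> enat t}"
    using space_F[OF t] by (auto simp: Dset_def not_le)
  then show ?thesis
    using \<sigma>_stopping_time[OF t] by auto
qed

lemma D_antimono: "s \<le> t \<Longrightarrow> D t \<subseteq> D s"
  by (auto simp: Dset_def) (meson enat_ord_simps(1) le_less_trans)

lemma Teff_le: "Teff \<omega> \<le> T"
  unfolding Te_def by (auto intro: Least_le[THEN order_trans] dest: LeastI_ex)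

lemma less_Teff_iff: "t < Teff \<omega> \<longleftrightarrow> t < T \<and> (\<forall>s\<le>t. cprob M F s (D (Suc s)) \<omega> \<noteq> 0)"
proof (cases "\<exists>t<T. cprob M F t (D (Suc t)) \<omega> = 0")
  case True
  define m where "m = (LEAST t. t < T \<and> cprob M F t (D (Suc t)) \<omega> = 0)"
  have m: "m < T" "cprob M F m (D (Suc m)) \<omega> = 0"
    using LeastI_ex[OF True] unfolding m_def by auto
  have "m \<le> s" if "s < T" "cprob M F s (D (Suc s)) \<omega> = 0" for s
    unfolding m_def by (rule Least_le) (use that in auto)
  moreover have "Teff \<omega> = m"
    using True unfolding Te_def m_def by simp
  ultimately show ?thesis
    using m by (metis le_trans less_le_not_le not_le_imp_less)
next
  case False
  then have "Teff \<omega> = T"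
    unfolding Te_def by (simp only: if_False)
  with False show ?thesis
    by auto
qed

lemma pred_less_Teff: "t \<le> T \<Longrightarrow> Measurable.pred (F t) (\<lambda>\<omega>. t < Teff \<omega>)"
proof -
  assume t: "t \<le> T"
  have "Measurable.pred (F t) (\<lambda>\<omega>. \<forall>s\<in>{..t}. cprob M F s (D (Suc s)) \<omega> \<noteq> 0)"
  proof (intro pred_intros_finite(3))
    fix s
    assume "s \<in> {..t}"
    have [measurable]: "cprob M F s (D (Suc s)) \<in> borel_measurable (F t)"
      unfolding cprob_def
      by (rule measurable_from_subalg[OF subalgebra_F_F[of s t]]) (use \<open>s \<in> {..t}\<close> t in auto)
    show "Measurable.pred (F t) (\<lambda>\<omega>. cprob M F s (D (Suc s)) \<omega> \<noteq> 0)"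
      by measurable
  qed simp
  moreover have "(\<lambda>\<omega>. t < Teff \<omega>) = (\<lambda>\<omega>. t < T \<and> (\<forall>s\<in>{..t}. cprob M F s (D (Suc s)) \<omega> \<noteq> 0))"
    by (auto simp: less_Teff_iff)
  ultimately show ?thesis
    by (cases "t < T") simp_all
qed

(* D (t+1) lies in the F t-measurable set D t, so P(D (t+1) | F t) vanishes off D t. *)
lemma less_Teff_imp_D: "t < T \<Longrightarrow> AE \<omega> in M. t < Teff \<omega> \<longrightarrow> \<omega> \<in> D t"
proof -
  assume t: "t < T"
  interpret sigma_finite_subalgebra M "F t"
    using sigma_finite_subalgebra_F t by simp
  have [measurable]: "D t \<in> sets (F t)" "D (Suc t) \<in> sets M"
    using sets_F_D sets_D t by auto
  have "indicator (D (Suc t)) = (\<lambda>\<omega>. indicator (D t) \<omega> * indicator (D (Suc t)) \<omega> :: real)"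
    using D_antimono[of t "Suc t"] by (auto simp: indicator_def fun_eq_iff)
  moreover have "AE \<omega> in M. CE t (\<lambda>\<omega>. indicator (D t) \<omega> * indicator (D (Suc t)) \<omega>) \<omega>
      = indicator (D t) \<omega> * CE t (indicator (D (Suc t))) \<omega>"
    by (intro real_cond_exp_mult) (auto simp flip: calculation intro: integrable_indicator_D)
  ultimately have "AE \<omega> in M. cprob M F t (D (Suc t)) \<omega> = indicator (D t) \<omega> * cprob M F t (D (Suc t)) \<omega>"
    unfolding cprob_def by simp
  then show ?thesis
    by eventually_elim (auto simp: less_Teff_iff indicator_def)
qed

lemma V_T: "V T = G T" and S_T: "S T = indicator (D T)"
  unfolding Vproc_def Sproc_def by simp_all

lemma V_S_step:
  assumes "t < T"
  shows "V t = (\<lambda>\<omega>. if t < Teff \<omega> then (if J t \<omega> \<le> G t \<omega> then G t \<omega> else J t \<omega>) else G t \<omega>)"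
    and "S t = (\<lambda>\<omega>. if t < Teff \<omega> then (if J t \<omega> \<le> G t \<omega> then 1 else CE t (S (Suc t)) \<omega>)
      else indicator (D t) \<omega>)"
proof -
  have n: "T - t = Suc (T - Suc t)" "T - Suc (T - Suc t) = t"
    using assms by simp_all
  show "V t = (\<lambda>\<omega>. if t < Teff \<omega> then (if J t \<omega> \<le> G t \<omega> then G t \<omega> else J t \<omega>) else G t \<omega>)"
    unfolding Vproc_def[of _ _ _ _ _ t] n(1)
    by (simp only: VSrec.simps Let_def n(2) fst_conv snd_conv flip: Vproc_def Sproc_def)
  show "S t = (\<lambda>\<omega>. if t < Teff \<omega> then (if J t \<omega> \<le> G t \<omega> then 1 else CE t (S (Suc t)) \<omega>)
      else indicator (D t) \<omega>)"
    unfolding Sproc_def[of _ _ _ _ _ t] n(1)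
    by (simp only: VSrec.simps Let_def n(2) fst_conv snd_conv flip: Vproc_def Sproc_def)
qed

lemma V_S_measurable:
  assumes t: "t \<le> T"
  shows "V t \<in> borel_measurable (F t) \<and> S t \<in> borel_measurable (F t)"
proof -
  have [measurable]: "G t \<in> borel_measurable (F t)" "Measurable.pred (F t) (\<lambda>\<omega>. t < Teff \<omega>)"
    "D t \<in> sets (F t)"
    using G_adapted pred_less_Teff sets_F_D t by auto
  show ?thesis
  proof (cases "t < T")
    case True
    show ?thesis
      unfolding V_S_step[OF True] by measurable
  next
    case False
    with t have "t = T"
      by simp
    with \<open>G t \<in> borel_measurable (F t)\<close> \<open>D t \<in> sets (F t)\<close> show ?thesis
      by (simp add: V_T S_T borel_measurable_indicator)
  qed
qed

lemma \<theta>\<^sub>V_iff: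
  assumes "t \<le> T"
  shows "\<theta>\<^sub>V t \<omega> \<longleftrightarrow> (t < Teff \<omega> \<longrightarrow> J t \<omega> \<le> G t \<omega>)"
proof (cases "t < T")
  case True
  then show ?thesis
    by (simp add: V_S_step)
next
  case False
  with assms Teff_le[of \<omega>] show ?thesis
    by (simp add: V_T)
qed

lemma \<theta>\<^sub>V_T: "\<theta>\<^sub>V T \<omega>"
  by (simp add: V_T)

lemma pred_\<theta>\<^sub>V:
  assumes "t \<le> T"
  shows "Measurable.pred (F t) (\<theta>\<^sub>V t)"
proof -
  have [measurable]: "V t \<in> borel_measurable (F t)" "G t \<in> borel_measurable (F t)"
    using V_S_measurable G_adapted assms by auto
  show ?thesis
    by measurable
qed

definition first_stop :: "nat \<Rightarrow> 'a \<Rightarrow> nat" where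
  "first_stop t \<omega> = (LEAST s. t \<le> s \<and> s \<le> T \<and> \<theta>\<^sub>V s \<omega>)"

lemma first_stop_bounds: "t \<le> T \<Longrightarrow> t \<le> first_stop t \<omega> \<and> first_stop t \<omega> \<le> T"
  unfolding first_stop_def by (rule LeastI2[of _ T]) (auto simp: \<theta>\<^sub>V_T)

lemma first_stop_step: "t < T \<Longrightarrow> first_stop t \<omega> = (if \<theta>\<^sub>V t \<omega> then t else first_stop (Suc t) \<omega>)"
  unfolding first_stop_def by (auto intro!: Least_equality arg_cong[where f = Least]
    simp: le_less Suc_le_eq)

lemma Lop_\<theta>\<^sub>V: "t < T \<Longrightarrow> Lop T \<theta>\<^sub>V t \<omega> = enat (first_stop (Suc t) \<omega>)"
  using \<theta>\<^sub>V_T[of \<omega>]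
  by (auto simp: Lop_def first_stop_def Suc_le_eq intro!: exI[of _ T])

definition stopped_gain :: "nat \<Rightarrow> 'a \<Rightarrow> real" where
  "stopped_gain t \<omega> = G (first_stop t \<omega>) \<omega> * indicator (D (first_stop t \<omega>)) \<omega>"

definition stopped_alive :: "nat \<Rightarrow> 'a \<Rightarrow> real" where
  "stopped_alive t \<omega> = indicator (D (first_stop t \<omega>)) \<omega>"

lemma stopped_T:
  "stopped_gain T = (\<lambda>\<omega>. G T \<omega> * indicator (D T) \<omega>)" "stopped_alive T = indicator (D T)"
proof -
  have "first_stop T \<omega> = T" for \<omega>
    using first_stop_bounds[of T \<omega>] by simp
  then show "stopped_gain T = (\<lambda>\<omega>. G T \<omega> * indicator (D T) \<omega>)" "stopped_alive T = indicator (D T)"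
    by (simp_all add: stopped_gain_def stopped_alive_def fun_eq_iff)
qed

lemma stopped_step:
  assumes "t < T"
  shows "stopped_gain t = (\<lambda>\<omega>. if \<theta>\<^sub>V t \<omega> then G t \<omega> * indicator (D t) \<omega> else stopped_gain (Suc t) \<omega>)"
    and "stopped_alive t = (\<lambda>\<omega>. if \<theta>\<^sub>V t \<omega> then indicator (D t) \<omega> else stopped_alive (Suc t) \<omega>)"
  by (auto simp: stopped_gain_def stopped_alive_def first_stop_step[OF assms] fun_eq_iff)

lemma G_measurable: "t \<le> T \<Longrightarrow> G t \<in> borel_measurable M"
  using G_adapted measurable_F_M by blast

lemma G_D_measurable_F: "t \<le> T \<Longrightarrow> (\<lambda>\<omega>. G t \<omega> * indicator (D t) \<omega>) \<in> borel_measurable (F t)"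
  using G_adapted sets_F_D by measurable

lemma stopped_measurable:
  "t \<le> T \<Longrightarrow> stopped_gain t \<in> borel_measurable M \<and> stopped_alive t \<in> borel_measurable M"
proof (induction rule: inc_induct)
  case base
  have [measurable]: "G T \<in> borel_measurable M" "D T \<in> sets M"
    using G_measurable sets_D by auto
  show ?case
    unfolding stopped_T by measurable
next
  case (step n)
  have [measurable]: "Measurable.pred M (\<theta>\<^sub>V n)" "G n \<in> borel_measurable M" "D n \<in> sets M"
    "stopped_gain (Suc n) \<in> borel_measurable M" "stopped_alive (Suc n) \<in> borel_measurable M"
    using step measurable_F_M[of n, OF _ pred_\<theta>\<^sub>V[of n]] G_measurable[of n] sets_D by auto
  show ?case
    unfolding stopped_step[OF step.hyps(2)] by measurable
qed

lemma G_D_le_max: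
  "s \<le> T \<Longrightarrow> norm (G s \<omega> * indicator (D s) \<omega>)
    \<le> norm (Max ((\<lambda>t. \<bar>G t \<omega>\<bar> * indicator (D t) \<omega>) ` {..T}))"
proof -
  assume "s \<le> T"
  then have "\<bar>G s \<omega>\<bar> * indicator (D s) \<omega> \<le> Max ((\<lambda>t. \<bar>G t \<omega>\<bar> * indicator (D t) \<omega>) ` {..T})"
    by (intro Max_ge) auto
  then show ?thesis
    by (simp add: abs_mult)
qed

lemma integrable_G_D: "t \<le> T \<Longrightarrow> integrable M (\<lambda>\<omega>. G t \<omega> * indicator (D t) \<omega>)"
  using G_D_measurable_F measurable_F_M
  by (intro Bochner_Integration.integrable_bound[OF G_dominated] AE_I2 G_D_le_max) auto

lemma integrable_stopped_gain: "t \<le> T \<Longrightarrow> integrable M (stopped_gain t)"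
  using stopped_measurable first_stop_bounds unfolding stopped_gain_def
  by (intro Bochner_Integration.integrable_bound[OF G_dominated] AE_I2 G_D_le_max) auto

lemma integrable_stopped_alive: "t \<le> T \<Longrightarrow> integrable M (stopped_alive t)"
  using stopped_measurable
  by (intro integrable_const_bound[where B = 1]) (auto simp: stopped_alive_def)

lemma cond_exp_tower:
  assumes "s \<le> t" "t \<le> T" "integrable M f" "h \<in> borel_measurable M"
    and "AE \<omega> in M. h \<omega> = CE t f \<omega>"
  shows "AE \<omega> in M. CE s h \<omega> = CE s f \<omega>"
proof -
  interpret sigma_finite_subalgebra M "F s"
    using sigma_finite_subalgebra_F assms by simp
  have "AE \<omega> in M. CE s h \<omega> = CE s (CE t f) \<omega>"
    using assms by (intro real_cond_exp_cong) auto
  moreover have "AE \<omega> in M. CE s (CE t f) \<omega> = CE s f \<omega>"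
    using assms subalgebra_F subalgebra_F_F by (intro real_cond_exp_nested_subalg) auto
  ultimately show ?thesis
    by eventually_elim simp
qed

lemma cond_exp_next_of_S_V_cond_exp:
  assumes n: "n < T"
    and S_V: "AE \<omega> in M. S (Suc n) \<omega> = CE (Suc n) (stopped_alive (Suc n)) \<omega>
      \<and> S (Suc n) \<omega> * V (Suc n) \<omega> = CE (Suc n) (stopped_gain (Suc n)) \<omega>
      \<and> (\<omega> \<in> D (Suc n) \<or> Suc n < Teff \<omega> \<longrightarrow> 0 < S (Suc n) \<omega>)"
  shows "AE \<omega> in M. CE n (stopped_alive (Suc n)) \<omega> = CE n (S (Suc n)) \<omega>"
    and "AE \<omega> in M. CE n (stopped_gain (Suc n)) \<omega> = CE n (\<lambda>\<omega>. S (Suc n) \<omega> * V (Suc n) \<omega>) \<omega>"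
    and "AE \<omega> in M. n < Teff \<omega> \<longrightarrow> 0 < CE n (S (Suc n)) \<omega>"
proof -
  interpret sigma_finite_subalgebra M "F n"
    using sigma_finite_subalgebra_F n by simp
  have [measurable]: "S (Suc n) \<in> borel_measurable M" "V (Suc n) \<in> borel_measurable M"
    using V_S_measurable[of "Suc n"] measurable_F_M[of "Suc n"] n by auto
  have S_eq: "AE \<omega> in M. S (Suc n) \<omega> = CE (Suc n) (stopped_alive (Suc n)) \<omega>"
    using S_V by eventually_elim simp
  show "AE \<omega> in M. CE n (stopped_alive (Suc n)) \<omega> = CE n (S (Suc n)) \<omega>"
    by (rule cond_exp_tower[THEN AE_symmetric, OF _ _ integrable_stopped_alive _ S_eq]) (use n in auto)
  show "AE \<omega> in M. CE n (stopped_gain (Suc n)) \<omega> = CE n (\<lambda>\<omega>. S (Suc n) \<omega> * V (Suc n) \<omega>) \<omega>"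
    using S_V n by (intro cond_exp_tower[THEN AE_symmetric, of n "Suc n"] integrable_stopped_gain) auto
  have "AE \<omega> in M. 0 \<le> CE (Suc n) (stopped_alive (Suc n)) \<omega>"
    using stopped_measurable[of "Suc n"] n sigma_finite_subalgebra_F[of "Suc n"]
    by (intro sigma_finite_subalgebra.real_cond_exp_pos) (auto simp: stopped_alive_def)
  then have S_nonneg: "AE \<omega> in M. 0 \<le> S (Suc n) \<omega>"
    using S_eq by eventually_elim simp
  (* S (Suc n) > 0 on D (Suc n), and P(D (Suc n) | F n) > 0 before the effective horizon. *)
  have "integrable M (S (Suc n))"
    using integrable_cong_AE[OF _ borel_measurable_cond_exp2 S_eq] n
      sigma_finite_subalgebra.real_cond_exp_int(1)[OF sigma_finite_subalgebra_F integrable_stopped_alive]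
    by simp
  then have "AE \<omega> in M. 0 < cprob M F n (D (Suc n)) \<omega> \<longrightarrow> 0 < CE n (S (Suc n)) \<omega>"
    unfolding cprob_def using S_nonneg S_V integrable_indicator_D
    by (intro real_cond_exp_pos_if_pos) auto
  moreover have "AE \<omega> in M. 0 \<le> cprob M F n (D (Suc n)) \<omega>"
    unfolding cprob_def using sets_D by (intro real_cond_exp_pos) auto
  ultimately show "AE \<omega> in M. n < Teff \<omega> \<longrightarrow> 0 < CE n (S (Suc n)) \<omega>"
    by eventually_elim (auto simp: less_Teff_iff)
qed

lemma S_V_cond_exp:
  assumes "t \<le> T"
  shows "AE \<omega> in M. S t \<omega> = CE t (stopped_alive t) \<omega>
    \<and> S t \<omega> * V t \<omega> = CE t (stopped_gain t) \<omega>
    \<and> (\<omega> \<in> D t \<or> t < Teff \<omega> \<longrightarrow> 0 < S t \<omega>)"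
  using assms
proof (induction rule: inc_induct)
  case base
  interpret sigma_finite_subalgebra M "F T"
    using sigma_finite_subalgebra_F by simp
  have "AE \<omega> in M. CE T (stopped_alive T) \<omega> = indicator (D T) \<omega>"
    unfolding stopped_T using sets_F_D[of T] integrable_indicator_D by (intro real_cond_exp_F_meas) auto
  moreover have "AE \<omega> in M. CE T (stopped_gain T) \<omega> = G T \<omega> * indicator (D T) \<omega>"
    unfolding stopped_T using G_D_measurable_F integrable_G_D by (intro real_cond_exp_F_meas) auto
  ultimately show ?case
    by eventually_elim (auto simp: V_T S_T Teff_le[THEN leD])
next
  case (step n)
  then have n: "n < T"
    by simp
  interpret sigma_finite_subalgebra M "F n"
    using sigma_finite_subalgebra_F n by simp
  have [measurable]: "Measurable.pred (F n) (\<theta>\<^sub>V n)"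
    using pred_\<theta>\<^sub>V n by simp
  have "AE \<omega> in M. CE n (stopped_alive n) \<omega>
      = (if \<theta>\<^sub>V n \<omega> then indicator (D n) \<omega> else CE n (stopped_alive (Suc n)) \<omega>)"
    unfolding stopped_step[OF n] using n sets_F_D[of n]
    by (intro real_cond_exp_if integrable_indicator_D integrable_stopped_alive) auto
  moreover have "AE \<omega> in M. CE n (stopped_gain n) \<omega>
      = (if \<theta>\<^sub>V n \<omega> then G n \<omega> * indicator (D n) \<omega> else CE n (stopped_gain (Suc n)) \<omega>)"
    unfolding stopped_step[OF n] using n
    by (intro real_cond_exp_if G_D_measurable_F integrable_G_D integrable_stopped_gain) auto
  ultimately show ?case
    using less_Teff_imp_D[OF n] cond_exp_next_of_S_V_cond_exp[OF n step.IH]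
  proof eventually_elim
    case (elim \<omega>)
    then show ?case
      by (cases "n < Teff \<omega>"; cases "J n \<omega> \<le> G n \<omega>") (auto simp: V_S_step[OF n] mult.commute)
  qed
qed

lemma cond_exp_next:
  assumes "n < T"
  shows "AE \<omega> in M. CE n (stopped_alive (Suc n)) \<omega> = CE n (S (Suc n)) \<omega>"
    and "AE \<omega> in M. CE n (stopped_gain (Suc n)) \<omega> = CE n (\<lambda>\<omega>. S (Suc n) \<omega> * V (Suc n) \<omega>) \<omega>"
    and "AE \<omega> in M. n < Teff \<omega> \<longrightarrow> 0 < CE n (S (Suc n)) \<omega>"
  using cond_exp_next_of_S_V_cond_exp[OF assms S_V_cond_exp] assms by simp_all

lemma continuation_\<theta>\<^sub>V:
  assumes "t < T"
  shows "(\<lambda>\<omega>. Gat G (Lop T \<theta>\<^sub>V t \<omega>) \<omega> * indicator (survive_set M \<sigma> T \<theta>\<^sub>V t) \<omega>)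
      = stopped_gain (Suc t)"
    and "indicator (survive_set M \<sigma> T \<theta>\<^sub>V t) = stopped_alive (Suc t)"
proof -
  have "indicator (survive_set M \<sigma> T \<theta>\<^sub>V t) \<omega> = stopped_alive (Suc t) \<omega>" for \<omega>
    by (simp add: survive_set_def Lop_\<theta>\<^sub>V[OF assms] lhd_enat Dset_def stopped_alive_def
      indicator_def)
  then show "(\<lambda>\<omega>. Gat G (Lop T \<theta>\<^sub>V t \<omega>) \<omega> * indicator (survive_set M \<sigma> T \<theta>\<^sub>V t) \<omega>)
      = stopped_gain (Suc t)" "indicator (survive_set M \<sigma> T \<theta>\<^sub>V t) = stopped_alive (Suc t)"
    by (auto simp: Lop_\<theta>\<^sub>V[OF assms] Gat_def stopped_gain_def stopped_alive_def)
qed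

lemma Jcont_\<theta>\<^sub>V:
  assumes "t < T"
  shows "AE \<omega> in M. Jcont M F \<sigma> G T \<theta>\<^sub>V t \<omega> = J t \<omega>"
    and "AE \<omega> in M. t < Teff \<omega> \<longrightarrow> 0 < cprob M F t (survive_set M \<sigma> T \<theta>\<^sub>V t) \<omega>"
  unfolding Jcont_def cprob_def continuation_\<theta>\<^sub>V(1)[OF assms]
  unfolding continuation_\<theta>\<^sub>V(2)[OF assms]
  using cond_exp_next[OF assms] by auto

lemma \<theta>\<^sub>V_iff_Jcont:
  assumes "t \<le> T"
  shows "AE \<omega> in M. \<theta>\<^sub>V t \<omega> = (t < Teff \<omega> \<longrightarrow> Jcont M F \<sigma> G T \<theta>\<^sub>V t \<omega> \<le> G t \<omega>)"
proof (cases "t < T")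
  case True
  show ?thesis
    using Jcont_\<theta>\<^sub>V(1)[OF True] by eventually_elim (simp add: \<theta>\<^sub>V_iff assms)
next
  case False
  with assms have "t = T"
    by simp
  then show ?thesis
    by (simp add: \<theta>\<^sub>V_T Teff_le[THEN leD])
qed

lemma equilibrium_early_\<theta>\<^sub>V: "equilibrium_early M F \<sigma> G T \<theta>\<^sub>V"
proof -
  have "admissible M F \<sigma> T \<theta>\<^sub>V"
    unfolding admissible_def
  proof (intro conjI allI impI)
    fix t
    assume t: "t \<le> T"
    show "\<theta>\<^sub>V t \<in> measurable (F t) (count_space UNIV)"
      using pred_\<theta>\<^sub>V[OF t] .
    show "AE \<omega> in M. t < Teff \<omega> \<longrightarrow> 0 < cprob M F t (survive_set M \<sigma> T \<theta>\<^sub>V t) \<omega>"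
    proof (cases "t < T")
      case True
      then show ?thesis
        by (rule Jcont_\<theta>\<^sub>V(2))
    next
      case False
      with t show ?thesis
        by (simp add: Teff_le[THEN leD])
    qed
    show "AE \<omega> in M. Teff \<omega> \<le> t \<longrightarrow> \<theta>\<^sub>V t \<omega>"
      by (simp add: \<theta>\<^sub>V_iff[OF t])
  qed
  then show ?thesis
    using \<theta>\<^sub>V_iff_Jcont by (simp add: equilibrium_early_iff)
qed

lemma continuation_integrands_measurable:
  assumes "\<And>s. s \<le> T \<Longrightarrow> Measurable.pred M (\<theta> s)"
  shows "(\<lambda>\<omega>. Gat G (Lop T \<theta> t \<omega>) \<omega> * indicator (survive_set M \<sigma> T \<theta> t) \<omega>) \<in> borel_measurable M"
    and "(indicator (survive_set M \<sigma> T \<theta> t) :: 'a \<Rightarrow> real) \<in> borel_measurable M"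
proof -
  have L[measurable]: "Lop T \<theta> t \<in> measurable M (count_space UNIV)"
    using assms by (rule Lop_measurable)
  define G' where "G' n = (if n \<le> T then G n else (\<lambda>_. 0))" for n
  have [measurable]: "G' n \<in> borel_measurable M" for n
    using G_measurable by (simp add: G'_def)
  have "Gat G (Lop T \<theta> t \<omega>) \<omega> = (case Lop T \<theta> t \<omega> of enat n \<Rightarrow> G' n \<omega> | \<infinity> \<Rightarrow> 0)" for \<omega>
    by (cases "Lop T \<theta> t \<omega>") (auto simp: Gat_def G'_def dest: Lop_le)
  then have Gat: "(\<lambda>\<omega>. Gat G (Lop T \<theta> t \<omega>) \<omega>) \<in> borel_measurable M"
    by simp
  have "Measurable.pred M (\<lambda>\<omega>. lhd (Lop T \<theta> t \<omega>) (\<sigma> \<omega>))"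
    by (rule measurable_compose_countable[where f = "\<lambda>i \<omega>. lhd i (\<sigma> \<omega>)", OF _ L])
      (rule measurable_compose[OF \<sigma>_measurable], simp)
  then show ind: "(indicator (survive_set M \<sigma> T \<theta> t) :: 'a \<Rightarrow> real) \<in> borel_measurable M"
    by (simp add: survive_set_def pred_def)
  show "(\<lambda>\<omega>. Gat G (Lop T \<theta> t \<omega>) \<omega> * indicator (survive_set M \<sigma> T \<theta> t) \<omega>) \<in> borel_measurable M"
    using Gat ind by (rule borel_measurable_times)
qed

lemma Jcont_cong_AE:
  assumes t: "t \<le> T"
    and \<theta>: "\<And>s. s \<le> T \<Longrightarrow> Measurable.pred M (\<theta> s)"
    and \<theta>': "\<And>s. s \<le> T \<Longrightarrow> Measurable.pred M (\<theta>' s)"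
    and agree: "\<And>s. t < s \<Longrightarrow> s \<le> T \<Longrightarrow> AE \<omega> in M. \<theta> s \<omega> = \<theta>' s \<omega>"
  shows "AE \<omega> in M. Jcont M F \<sigma> G T \<theta> t \<omega> = Jcont M F \<sigma> G T \<theta>' t \<omega>"
proof -
  interpret sigma_finite_subalgebra M "F t"
    using sigma_finite_subalgebra_F t by simp
  have "AE \<omega> in M. \<forall>s\<in>{t<..T}. \<theta> s \<omega> = \<theta>' s \<omega>"
    using agree by (intro AE_finite_allI) auto
  then have L: "AE \<omega> in M. Lop T \<theta> t \<omega> = Lop T \<theta>' t \<omega>"
    by eventually_elim (auto intro: Lop_cong)
  then have I: "AE \<omega> in M. (indicator (survive_set M \<sigma> T \<theta> t) \<omega> :: real)
      = indicator (survive_set M \<sigma> T \<theta>' t) \<omega>"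
    by eventually_elim (simp add: survive_set_def indicator_def)
  with L have "AE \<omega> in M. Gat G (Lop T \<theta> t \<omega>) \<omega> * indicator (survive_set M \<sigma> T \<theta> t) \<omega>
      = Gat G (Lop T \<theta>' t \<omega>) \<omega> * indicator (survive_set M \<sigma> T \<theta>' t) \<omega>"
    by eventually_elim simp
  then have "AE \<omega> in M.
      CE t (\<lambda>\<omega>. Gat G (Lop T \<theta> t \<omega>) \<omega> * indicator (survive_set M \<sigma> T \<theta> t) \<omega>) \<omega>
      = CE t (\<lambda>\<omega>. Gat G (Lop T \<theta>' t \<omega>) \<omega> * indicator (survive_set M \<sigma> T \<theta>' t) \<omega>) \<omega>"
    by (intro real_cond_exp_cong continuation_integrands_measurable \<theta> \<theta>')
  moreover have "AE \<omega> in M. cprob M F t (survive_set M \<sigma> T \<theta> t) \<omega>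
      = cprob M F t (survive_set M \<sigma> T \<theta>' t) \<omega>"
    unfolding cprob_def using I by (intro real_cond_exp_cong continuation_integrands_measurable \<theta> \<theta>')
  ultimately show ?thesis
    by eventually_elim (simp add: Jcont_def)
qed

lemma equilibrium_early_unique:
  assumes eq: "equilibrium_early M F \<sigma> G T \<theta>" and "t \<le> T"
  shows "AE \<omega> in M. \<theta> t \<omega> = \<theta>\<^sub>V t \<omega>"
  using assms(2)
proof (induction "T - t" arbitrary: t rule: less_induct)
  case less
  have adm: "admissible M F \<sigma> T \<theta>"
    and fixed: "AE \<omega> in M. \<theta> t \<omega> = (t < Teff \<omega> \<longrightarrow> Jcont M F \<sigma> G T \<theta> t \<omega> \<le> G t \<omega>)"
    using eq less.prems by (auto simp: equilibrium_early_iff)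
  have "Measurable.pred M (\<theta> s)" "Measurable.pred M (\<theta>\<^sub>V s)" if "s \<le> T" for s
    using adm that measurable_F_M[OF that] pred_\<theta>\<^sub>V[OF that] unfolding admissible_def by auto
  moreover have "AE \<omega> in M. \<theta> s \<omega> = \<theta>\<^sub>V s \<omega>" if "t < s" "s \<le> T" for s
    using that by (intro less.hyps) auto
  ultimately have "AE \<omega> in M. Jcont M F \<sigma> G T \<theta> t \<omega> = Jcont M F \<sigma> G T \<theta>\<^sub>V t \<omega>"
    using less.prems by (intro Jcont_cong_AE) auto
  then show ?case
    using fixed \<theta>\<^sub>V_iff_Jcont[OF less.prems] by eventually_elim simp
qed

end

theorem theorem3p1:
  fixes M :: "'a measure" and F :: "nat \<Rightarrow> 'a measure" and \<sigma> :: "'a \<Rightarrow> enat"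
    and G :: "nat \<Rightarrow> 'a \<Rightarrow> real" and T :: nat
  assumes "prob_space M"
    and "\<forall>t\<le>T. subalgebra M (F t)"
    and "\<forall>s t. s \<le> t \<and> t \<le> T \<longrightarrow> sets (F s) \<subseteq> sets (F t)"
    and "sets (F 0) = {{}, space M}"
    and "\<sigma> \<in> measurable M (count_space UNIV)"
    and "\<forall>t\<le>T. {\<omega> \<in> space M. \<sigma> \<omega> \<le> enat t} \<in> sets (F t)"
    and "AE \<omega> in M. 0 < \<sigma> \<omega>"
    and "\<forall>t\<le>T. G t \<in> borel_measurable (F t)"
    and "integrable M (\<lambda>\<omega>. Max ((\<lambda>t. \<bar>G t \<omega>\<bar> * indicator (Dset M \<sigma> t) \<omega>) ` {..T}))"
  shows "equilibrium_early M F \<sigma> G T (\<lambda>t \<omega>. G t \<omega> \<ge> Vproc M F \<sigma> G T t \<omega>)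
    \<and> (\<forall>\<theta>. equilibrium_early M F \<sigma> G T \<theta> \<longrightarrow>
          (\<forall>t\<le>T. AE \<omega> in M. \<theta> t \<omega> = (G t \<omega> \<ge> Vproc M F \<sigma> G T t \<omega>)))"
proof -
  interpret stopping_problem M F \<sigma> G T
    by (rule stopping_problem.intro[OF assms(1)], unfold_locales) (use assms in auto)
  show ?thesis
    using equilibrium_early_\<theta>\<^sub>V equilibrium_early_unique by blast
qed

end
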